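(* $\mathrm{Aut}(L_{\mathbb Z})=O(3,1;\mathbb Z)$.
   Context: Let $L_{\mathbb Z}=\{(y_0,y_1,y_2,y_3)^T\in\mathbb Z^4:-y_0^2+y_1^2+y_2^2+y_3^2=0\}$ be the set of integer points on the Lorentz light cone, and let $\mathrm{Aut}(L_{\mathbb Z})$ be the group of invertible real linear transformations $U$ of $\mathbb R^4$ with $U(L_{\mathbb Z})=L_{\mathbb Z}$. Let $Q_L=\mathrm{diag}(-1,1,1,1)$ and $O(3,1;\mathbb Z)=\{U\in M_4(\mathbb Z):U^TQ_LU=Q_L\}$. *)

theory Defs
  imports "HOL-Analysis.Analysis" "HOL-Library.Numeral_Type"
begin

text \<open>Vectors in R^4 are real^4 with coordinates y_0,y_1,y_2,y_3 stored at indices 1,2,3,4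
  of the index type 4 (these four indices are distinct).\<close>

definition Q_L :: "real^4^4" where
  "Q_L = (\<chi> i j. if i = j then (if i = 1 then -1 else 1) else 0)"

definition L_Z :: "(real^4) set" where
  "L_Z = {y. (\<forall>i. y $ i \<in> \<int>) \<and>
              -((y $ 1)^2) + (y $ 2)^2 + (y $ 3)^2 + (y $ 4)^2 = 0}"

definition Aut_L_Z :: "(real^4^4) set" where
  "Aut_L_Z = {U. invertible U \<and> (\<lambda>y. U *v y) ` L_Z = L_Z}"

definition O31Z :: "(real^4^4) set" where
  "O31Z = {U. (\<forall>i j. U $ i $ j \<in> \<int>) \<and> transpose U ** Q_L ** U = Q_L}"

end

theory Submission
  imports Defs
begin

(* If U maps the integral light cone into itself, the quadratic form of the Gram matrix
   U^T Q_L U vanishes on the integral null vectors e0 + ek, e0 - ek, (5,3,4,0), (5,3,0,4) and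
   (5,0,3,4), so the Gram matrix is l Q_L; and l is an integer, being a value of the Lorentz
   bilinear form on two integral vectors. Doing the same for U^-1 forces l = 1 or l = -1, and
   l = -1 is excluded by the signature, so U is a real Lorentz transformation with
   U^-1 = Q_L U^T Q_L. The images of e0 + ek and e0 - ek under U and U^-1 show that all entries
   of U agree modulo Z and lie in Z/2. If they were all half-odd, the first column c would have
   4 q(c) = 2 mod 8 since odd squares are 1 mod 8, contradicting q(c) = -1. Conversely,
   Q_L U^T Q_L is an integral inverse of any U in O(3,1;Z), so such U permute the integral
   light cone. *)

lemma matrix_vector_mult_Ints:
  fixes A :: "real^'m^'n"
  assumes "\<forall>i j. A$i$j \<in> \<int>" and "\<forall>j. x$j \<in> \<int>"
  shows "(A *v x)$i \<in> \<int>"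
  using assms by (auto simp: matrix_vector_mult_def intro!: Ints_mult)

lemma inner_Ints:
  fixes x y :: "real^'n"
  assumes "\<forall>i. x$i \<in> \<int>" and "\<forall>i. y$i \<in> \<int>"
  shows "x \<bullet> y \<in> \<int>"
  using assms by (auto simp: inner_vec_def intro!: Ints_mult)

lemma inner_matrix_vector_congruence:
  fixes U :: "real^'m^'n" and Q :: "real^'n^'n"
  shows "(U *v x) \<bullet> (Q *v (U *v y)) = x \<bullet> ((transpose U ** Q ** U) *v y)"
proof -
  have "(U *v x) \<bullet> (Q *v (U *v y)) = (x v* transpose U) \<bullet> (Q *v (U *v y))" by simp
  also have "\<dots> = x \<bullet> (transpose U *v (Q *v (U *v y)))" by (rule dot_lmul_matrix)
  finally show ?thesis by (simp add: matrix_vector_mul_assoc matrix_mul_assoc)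
qed

lemma form_preserving_matrix_inverse:
  fixes U Q :: "real^'n^'n"
  assumes "transpose U ** Q ** U = Q" and "Q ** Q = mat 1"
  shows "(Q ** transpose U ** Q) ** U = mat 1" and "U ** (Q ** transpose U ** Q) = mat 1"
proof -
  have "(Q ** transpose U ** Q) ** U = Q ** (transpose U ** Q ** U)"
    by (simp add: matrix_mul_assoc)
  then show "(Q ** transpose U ** Q) ** U = mat 1"
    using assms by simp
  then show "U ** (Q ** transpose U ** Q) = mat 1"
    using matrix_left_right_inverse by blast
qed

lemma matrix_left_inverse_maps_into:
  fixes U V :: "'a::semiring_1^'n^'n"
  assumes "V ** U = mat 1" and "(\<lambda>y. U *v y) ` S = S"
  shows "(\<lambda>y. V *v y) ` S \<subseteq> S"
proof
  fix x assume "x \<in> (\<lambda>y. V *v y) ` S"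
  then obtain y where "y \<in> S" and x: "x = V *v y" by blast
  then obtain z where "z \<in> S" and "y = U *v z" using assms(2) by blast
  with x show "x \<in> S" using assms(1) by (simp add: matrix_vector_mul_assoc)
qed

lemma matrix_image_eq_if_inverse_maps_into:
  fixes U V :: "'a::comm_semiring_1^'n^'n"
  assumes "U ** V = mat 1" and "(\<lambda>y. U *v y) ` S \<subseteq> S" and "(\<lambda>y. V *v y) ` S \<subseteq> S"
  shows "(\<lambda>y. U *v y) ` S = S"
proof
  show "S \<subseteq> (\<lambda>y. U *v y) ` S"
  proof
    fix y assume "y \<in> S"
    then have "V *v y \<in> S" and "y = U *v (V *v y)"
      using assms by (auto simp: matrix_vector_mul_assoc)
    then show "y \<in> (\<lambda>y. U *v y) ` S" by blast
  qed
qed (use assms in auto)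

lemma Ints_mult_eq_1:
  fixes a b :: real
  assumes "a \<in> \<int>" and "b \<in> \<int>" and "a * b = 1"
  shows "a = 1 \<or> a = -1"
proof -
  obtain m n :: int where "a = of_int m" and "b = of_int n" using assms(1,2) by (auto elim!: Ints_cases)
  with assms(3) have "m * n = 1" by (metis of_int_eq_1_iff of_int_mult)
  with \<open>a = of_int m\<close> show ?thesis using zmult_eq_1_iff by auto
qed

lemma odd_square_mod_8:
  fixes x :: int
  assumes "odd x"
  shows "x\<^sup>2 mod 8 = 1"
proof -
  obtain m where m: "x = 2 * m + 1" using assms by (blast elim: oddE)
  have "even (m * (m + 1))" by simp
  then obtain t where t: "m * (m + 1) = 2 * t" by (blast elim: evenE)
  have "x\<^sup>2 = 4 * (m * (m + 1)) + 1" unfolding m by (simp add: power2_eq_square algebra_simps)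
  then show ?thesis unfolding t by simp
qed

definition lorentz_form :: "real^4 \<Rightarrow> real" where
  "lorentz_form y = -((y$1)\<^sup>2) + (y$2)\<^sup>2 + (y$3)\<^sup>2 + (y$4)\<^sup>2"

lemma L_Z_iff: "y \<in> L_Z \<longleftrightarrow> (\<forall>i. y$i \<in> \<int>) \<and> lorentz_form y = 0"
  by (simp add: L_Z_def lorentz_form_def)

lemma transpose_Q_L: "transpose Q_L = Q_L"
  by (simp add: vec_eq_iff transpose_def Q_L_def)

lemma Q_L_mult_Q_L: "Q_L ** Q_L = mat 1"
  by (simp add: vec_eq_iff forall_4 matrix_matrix_mult_def sum_4 Q_L_def mat_def)

lemma Q_L_Ints: "\<forall>i j. Q_L $ i $ j \<in> \<int>"
  by (simp add: Q_L_def)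

lemma lorentz_form_eq_inner: "lorentz_form y = y \<bullet> (Q_L *v y)"
  by (simp add: lorentz_form_def inner_vec_def matrix_vector_mult_def Q_L_def sum_4 power2_eq_square)

lemma lorentz_form_matrix_vector_mult:
  "lorentz_form (U *v x) = x \<bullet> ((transpose U ** Q_L ** U) *v x)"
  unfolding lorentz_form_eq_inner by (rule inner_matrix_vector_congruence)

lemma lorentz_form_similitude:
  fixes U :: "real^4^4"
  assumes "transpose U ** Q_L ** U = c *\<^sub>R Q_L"
  shows "lorentz_form (U *v x) = c * lorentz_form x"
proof -
  have "lorentz_form (U *v x) = x \<bullet> ((c *\<^sub>R Q_L) *v x)"
    by (simp only: lorentz_form_matrix_vector_mult assms)
  also have "\<dots> = c * lorentz_form x"
    by (simp only: lorentz_form_eq_inner inner_scaleR_right flip: scaleR_matrix_vector_assoc)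
  finally show ?thesis .
qed

definition vec4 :: "real \<Rightarrow> real \<Rightarrow> real \<Rightarrow> real \<Rightarrow> real^4" where
  "vec4 a b c d = (\<chi> i. if i = 1 then a else if i = 2 then b else if i = 3 then c else d)"

lemma vec4_nth [simp]:
  "vec4 a b c d $ 1 = a" "vec4 a b c d $ 2 = b" "vec4 a b c d $ 3 = c" "vec4 a b c d $ 4 = d"
  by (simp_all add: vec4_def)

lemma vec4_in_L_Z:
  assumes "a \<in> \<int>" "b \<in> \<int>" "c \<in> \<int>" "d \<in> \<int>" and "-(a\<^sup>2) + b\<^sup>2 + c\<^sup>2 + d\<^sup>2 = 0"
  shows "vec4 a b c d \<in> L_Z"
  using assms by (simp add: L_Z_def forall_4)

lemma transpose_eq_self_nth:
  assumes "transpose G = G"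
  shows "G$j$i = G$i$j"
  using assms unfolding transpose_def vec_eq_iff by simp

lemma symmetric_quadratic_form_vec4:
  fixes G :: "real^4^4"
  assumes "transpose G = G"
  shows "vec4 a b c d \<bullet> (G *v vec4 a b c d) =
    a\<^sup>2 * G$1$1 + b\<^sup>2 * G$2$2 + c\<^sup>2 * G$3$3 + d\<^sup>2 * G$4$4
    + 2*a*b * G$1$2 + 2*a*c * G$1$3 + 2*a*d * G$1$4
    + 2*b*c * G$2$3 + 2*b*d * G$2$4 + 2*c*d * G$3$4"
proof -
  have "G$2$1 = G$1$2" "G$3$1 = G$1$3" "G$4$1 = G$1$4"
    "G$3$2 = G$2$3" "G$4$2 = G$2$4" "G$4$3 = G$3$4"
    using transpose_eq_self_nth[OF assms] by simp_all
  then show ?thesis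
    by (simp add: inner_vec_def matrix_vector_mult_def sum_4 power2_eq_square algebra_simps)
qed

lemma quadratic_form_vanishing_on_L_Z:
  fixes G :: "real^4^4"
  assumes sym: "transpose G = G" and null: "\<And>x. x \<in> L_Z \<Longrightarrow> x \<bullet> (G *v x) = 0"
  shows "G = (- G$1$1) *\<^sub>R Q_L"
proof -
  have q: "a\<^sup>2 * G$1$1 + b\<^sup>2 * G$2$2 + c\<^sup>2 * G$3$3 + d\<^sup>2 * G$4$4
    + 2*a*b * G$1$2 + 2*a*c * G$1$3 + 2*a*d * G$1$4
    + 2*b*c * G$2$3 + 2*b*d * G$2$4 + 2*c*d * G$3$4 = 0"
    if "a \<in> \<int>" "b \<in> \<int>" "c \<in> \<int>" "d \<in> \<int>" "-(a\<^sup>2) + b\<^sup>2 + c\<^sup>2 + d\<^sup>2 = 0" for a b c d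
    using null[OF vec4_in_L_Z[OF that]] by (simp add: symmetric_quadratic_form_vec4[OF sym])
  have time_space: "G$1$2 = 0" "G$1$3 = 0" "G$1$4 = 0"
      "G$2$2 = - G$1$1" "G$3$3 = - G$1$1" "G$4$4 = - G$1$1"
    using q[of 1 1 0 0] q[of 1 "-1" 0 0] q[of 1 0 1 0] q[of 1 0 "-1" 0]
      q[of 1 0 0 1] q[of 1 0 0 "-1"] by simp_all
  have space_space: "G$2$3 = 0" "G$2$4 = 0" "G$3$4 = 0"
    using q[of 5 3 4 0] q[of 5 3 0 4] q[of 5 0 3 4] time_space by simp_all
  show ?thesis
    using transpose_eq_self_nth[OF sym] time_space space_space by (simp add: vec_eq_iff forall_4 Q_L_def)
qed

lemma similitude_factor_Ints:
  fixes U :: "real^4^4"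
  assumes into: "(\<lambda>y. U *v y) ` L_Z \<subseteq> L_Z" and G: "transpose U ** Q_L ** U = l *\<^sub>R Q_L"
  shows "l \<in> \<int>"
proof -
  define x y where "x = vec4 1 1 0 0" and "y = vec4 1 0 1 0"
  have "x \<in> L_Z" and "y \<in> L_Z" by (simp_all add: x_def y_def vec4_in_L_Z)
  then have "\<forall>i. (U *v x)$i \<in> \<int>" and "\<forall>i. (U *v y)$i \<in> \<int>"
    using into by (auto simp: L_Z_iff image_subset_iff)
  then have "(U *v x) \<bullet> (Q_L *v (U *v y)) \<in> \<int>"
    using Q_L_Ints by (blast intro: inner_Ints matrix_vector_mult_Ints)
  also have "(U *v x) \<bullet> (Q_L *v (U *v y)) = x \<bullet> ((l *\<^sub>R Q_L) *v y)"
    unfolding G[symmetric] by (rule inner_matrix_vector_congruence)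
  also have "\<dots> = - l"
    by (simp add: x_def y_def inner_vec_def matrix_vector_mult_def sum_4 Q_L_def
        flip: scaleR_matrix_vector_assoc)
  finally show ?thesis
    by (metis Ints_minus minus_minus)
qed

lemma cone_preserving_similitude:
  fixes U :: "real^4^4"
  assumes "(\<lambda>y. U *v y) ` L_Z \<subseteq> L_Z"
  obtains l where "l \<in> \<int>" and "transpose U ** Q_L ** U = l *\<^sub>R Q_L"
proof -
  define G where "G = transpose U ** Q_L ** U"
  have "transpose G = G"
    by (simp add: G_def matrix_transpose_mul transpose_Q_L matrix_mul_assoc)
  moreover have "x \<bullet> (G *v x) = 0" if "x \<in> L_Z" for x
    using assms that
    by (auto simp: G_def L_Z_iff image_subset_iff simp flip: lorentz_form_matrix_vector_mult)
  ultimately have "G = (- G$1$1) *\<^sub>R Q_L"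
    by (rule quadratic_form_vanishing_on_L_Z)
  then show thesis
    using that similitude_factor_Ints[OF assms] unfolding G_def by blast
qed

lemma not_lorentz_antisimilitude:
  fixes U :: "real^4^4"
  shows "transpose U ** Q_L ** U \<noteq> (-1) *\<^sub>R Q_L"
proof
  assume "transpose U ** Q_L ** U = (-1) *\<^sub>R Q_L"
  then have anti: "lorentz_form (U *v z) = - lorentz_form z" for z
    using lorentz_form_similitude[of U "-1" z] by simp
  obtain z where z1: "(U *v z)$1 = 0" and pos: "lorentz_form z > 0"
  proof (cases "U$1$2 = 0 \<and> U$1$3 = 0")
    case True
    then show thesis
      by (intro that[of "vec4 0 1 0 0"]) (simp_all add: matrix_vector_mult_def sum_4 lorentz_form_def)
  next
    case False
    then have "(U$1$3)\<^sup>2 + (U$1$2)\<^sup>2 > 0"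
      by (auto simp: sum_power2_gt_zero_iff)
    then show thesis
      by (intro that[of "vec4 0 (U$1$3) (- U$1$2) 0"])
        (simp_all add: matrix_vector_mult_def sum_4 lorentz_form_def algebra_simps)
  qed
  have "lorentz_form (U *v z) \<ge> 0"
    using z1 by (simp add: lorentz_form_def)
  with anti pos show False by simp
qed

lemma cone_preserving_row_congruent:
  fixes U :: "real^4^4"
  assumes "(\<lambda>y. U *v y) ` L_Z \<subseteq> L_Z"
  shows "2 * U$i$1 \<in> \<int>" and "U$i$k - U$i$1 \<in> \<int>"
proof -
  have img: "(U *v vec4 a b c d)$i \<in> \<int>"
    if "a \<in> \<int>" "b \<in> \<int>" "c \<in> \<int>" "d \<in> \<int>" "-(a\<^sup>2) + b\<^sup>2 + c\<^sup>2 + d\<^sup>2 = 0" for a b c d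
    using assms vec4_in_L_Z[OF that] by (auto simp: L_Z_iff image_subset_iff)
  have sums: "U$i$1 + U$i$k \<in> \<int>" "U$i$1 - U$i$k \<in> \<int>" if "k \<noteq> 1" for k
    using img[of 1 1 0 0] img[of 1 "-1" 0 0] img[of 1 0 1 0] img[of 1 0 "-1" 0]
      img[of 1 0 0 1] img[of 1 0 0 "-1"] that exhaust_4[of k]
    by (auto simp: matrix_vector_mult_def sum_4)
  have "2 * U$i$1 = (U$i$1 + U$i$2) + (U$i$1 - U$i$2)" by simp
  also have "\<dots> \<in> \<int>" by (rule Ints_add) (simp_all add: sums)
  finally show "2 * U$i$1 \<in> \<int>" .
  show "U$i$k - U$i$1 \<in> \<int>"
    using sums(2)[of k] Ints_minus[of "U$i$1 - U$i$k"] by (cases "k = 1") simp_all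
qed

lemma Q_L_transpose_Q_L_nth:
  "(Q_L ** transpose U ** Q_L)$i$j = (if i = 1 then -1 else 1) * U$j$i * (if j = 1 then -1 else 1)"
  using exhaust_4[of i] exhaust_4[of j]
  by (auto simp: matrix_matrix_mult_def sum_4 Q_L_def transpose_def)

lemma cone_preserving_entries_congruent:
  fixes U :: "real^4^4"
  assumes "(\<lambda>y. U *v y) ` L_Z \<subseteq> L_Z" and "(\<lambda>y. (Q_L ** transpose U ** Q_L) *v y) ` L_Z \<subseteq> L_Z"
  shows "U$i$j - U$1$1 \<in> \<int>"
proof -
  define V where "V = Q_L ** transpose U ** Q_L"
  have "U$i$1 - U$1$1 \<in> \<int>"
  proof (cases "i = 1")
    case False
    then have "U$1$1 - U$i$1 = 2 * V$1$1 + (V$1$i - V$1$1)"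
      by (simp add: V_def Q_L_transpose_Q_L_nth)
    also have "\<dots> \<in> \<int>"
      using cone_preserving_row_congruent[OF assms(2)[folded V_def]] by (rule Ints_add)
    finally show ?thesis by (metis Ints_minus minus_diff_eq)
  qed simp
  moreover have "U$i$j - U$i$1 \<in> \<int>"
    using cone_preserving_row_congruent(2)[OF assms(1)] .
  ultimately have "(U$i$1 - U$1$1) + (U$i$j - U$i$1) \<in> \<int>" by (rule Ints_add)
  then show ?thesis by simp
qed

lemma lorentz_form_neg1_half_integral_Ints:
  assumes half: "2 * y$1 \<in> \<int>" and congruent: "\<And>i. y$i - y$1 \<in> \<int>"
    and "lorentz_form y = -1"
  shows "y$1 \<in> \<int>"
proof (rule ccontr)
  assume "y$1 \<notin> \<int>"
  obtain m where m: "2 * y$1 = of_int m" using half by (blast elim: Ints_cases)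
  have "odd m"
  proof
    assume "even m"
    then have "y$1 = of_int (m div 2)" using m by auto
    with \<open>y$1 \<notin> \<int>\<close> show False by simp
  qed
  have "\<forall>i. \<exists>n. y$i - y$1 = of_int n"
    using congruent by (blast elim: Ints_cases)
  then obtain t where t: "y$i - y$1 = of_int (t i)" for i
    by metis
  define a where "a i = m + 2 * t i" for i
  have a_eq: "of_int (a i) = 2 * y$i" for i
    using t[of i] m by (simp add: a_def algebra_simps)
  have "odd (a i)" for i
    using \<open>odd m\<close> by (simp add: a_def)
  then have k: "(a i)\<^sup>2 = 8 * ((a i)\<^sup>2 div 8) + 1" for i
    using odd_square_mod_8 mult_div_mod_eq[of 8 "(a i)\<^sup>2"] by metis
  have "of_int (-((a 1)\<^sup>2) + (a 2)\<^sup>2 + (a 3)\<^sup>2 + (a 4)\<^sup>2) = 4 * lorentz_form y"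
    by (simp add: a_eq lorentz_form_def power2_eq_square algebra_simps)
  also have "\<dots> = of_int (-4)"
    using \<open>lorentz_form y = -1\<close> by simp
  finally have "-((a 1)\<^sup>2) + (a 2)\<^sup>2 + (a 3)\<^sup>2 + (a 4)\<^sup>2 = -4"
    by (simp only: of_int_eq_iff)
  then have "8 * ((a 2)\<^sup>2 div 8 + (a 3)\<^sup>2 div 8 + (a 4)\<^sup>2 div 8 - (a 1)\<^sup>2 div 8) = -6"
    by (subst (asm) (1 2 3 4) k) simp
  then show False by presburger
qed

lemma O31Z_subset_Aut_L_Z: "O31Z \<subseteq> Aut_L_Z"
proof
  fix U assume "U \<in> O31Z"
  then have U_Ints: "\<forall>i j. U$i$j \<in> \<int>" and iso: "transpose U ** Q_L ** U = Q_L"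
    by (simp_all add: O31Z_def)
  define V where "V = Q_L ** transpose U ** Q_L"
  have VU: "V ** U = mat 1" and UV: "U ** V = mat 1"
    using form_preserving_matrix_inverse[OF iso Q_L_mult_Q_L] by (simp_all add: V_def)
  have V_Ints: "\<forall>i j. V$i$j \<in> \<int>"
    using U_Ints by (simp add: V_def Q_L_transpose_Q_L_nth)
  have preserves: "lorentz_form (U *v x) = lorentz_form x" for x
    using lorentz_form_similitude[of U 1 x] iso by simp
  have "(\<lambda>y. U *v y) ` L_Z \<subseteq> L_Z"
    using U_Ints by (auto simp: L_Z_iff preserves intro: matrix_vector_mult_Ints)
  moreover have "(\<lambda>y. V *v y) ` L_Z \<subseteq> L_Z"
  proof clarify
    fix y assume "y \<in> L_Z"
    moreover have "lorentz_form (V *v y) = lorentz_form y"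
      using preserves[of "V *v y"] by (simp add: matrix_vector_mul_assoc UV)
    ultimately show "V *v y \<in> L_Z"
      using V_Ints by (auto simp: L_Z_iff intro: matrix_vector_mult_Ints)
  qed
  ultimately have "(\<lambda>y. U *v y) ` L_Z = L_Z"
    by (rule matrix_image_eq_if_inverse_maps_into[OF UV])
  then show "U \<in> Aut_L_Z"
    using UV VU by (auto simp: Aut_L_Z_def invertible_def)
qed

lemma Aut_L_Z_lorentz_isometry:
  assumes "U \<in> Aut_L_Z"
  shows "transpose U ** Q_L ** U = Q_L"
proof -
  obtain W where UW: "U ** W = mat 1" and WU: "W ** U = mat 1"
    using assms by (auto simp: Aut_L_Z_def invertible_def)
  have U_onto: "(\<lambda>y. U *v y) ` L_Z = L_Z"
    using assms by (simp add: Aut_L_Z_def)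
  obtain l where "l \<in> \<int>" and l: "transpose U ** Q_L ** U = l *\<^sub>R Q_L"
    using cone_preserving_similitude U_onto by blast
  obtain m where "m \<in> \<int>" and m: "transpose W ** Q_L ** W = m *\<^sub>R Q_L"
    using cone_preserving_similitude matrix_left_inverse_maps_into[OF WU U_onto] by blast
  define e where "e = vec4 1 0 0 0"
  have "lorentz_form e = lorentz_form (U *v (W *v e))"
    by (simp add: matrix_vector_mul_assoc UW)
  also have "\<dots> = l * m * lorentz_form e"
    by (simp add: lorentz_form_similitude[OF l] lorentz_form_similitude[OF m])
  finally have "l * m = 1"
    by (simp add: e_def lorentz_form_def)
  then have "l = 1 \<or> l = -1"
    using Ints_mult_eq_1 \<open>l \<in> \<int>\<close> \<open>m \<in> \<int>\<close> by blast
  then show ?thesis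
    using l not_lorentz_antisimilitude[of U] by auto
qed

lemma Aut_L_Z_subset_O31Z: "Aut_L_Z \<subseteq> O31Z"
proof
  fix U assume U: "U \<in> Aut_L_Z"
  have iso: "transpose U ** Q_L ** U = Q_L"
    using U by (rule Aut_L_Z_lorentz_isometry)
  define V where "V = Q_L ** transpose U ** Q_L"
  have U_onto: "(\<lambda>y. U *v y) ` L_Z = L_Z"
    using U by (simp add: Aut_L_Z_def)
  have V_into: "(\<lambda>y. V *v y) ` L_Z \<subseteq> L_Z"
    using form_preserving_matrix_inverse(1)[OF iso Q_L_mult_Q_L]
    by (intro matrix_left_inverse_maps_into[OF _ U_onto]) (simp add: V_def)
  have congruent: "U$i$j - U$1$1 \<in> \<int>" for i j
    using cone_preserving_entries_congruent U_onto V_into by (simp add: V_def)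
  define c where "c = U *v vec4 1 0 0 0"
  have "c$1 \<in> \<int>"
  proof (rule lorentz_form_neg1_half_integral_Ints)
    show "2 * c$1 \<in> \<int>" "c$i - c$1 \<in> \<int>" for i
      using cone_preserving_row_congruent(1)[of U 1] U_onto congruent[of i 1]
      by (simp_all add: c_def matrix_vector_mult_def sum_4)
    show "lorentz_form c = -1"
      using lorentz_form_similitude[of U 1] iso by (simp add: c_def lorentz_form_def)
  qed
  then have "U$1$1 \<in> \<int>"
    by (simp add: c_def matrix_vector_mult_def sum_4)
  then have "\<forall>i j. U$i$j \<in> \<int>"
    using congruent by (metis Ints_add diff_add_cancel)
  with iso show "U \<in> O31Z"
    by (simp add: O31Z_def)
qed

theorem lemma7p3:
  shows "Aut_L_Z = O31Z"
  using Aut_L_Z_subset_O31Z O31Z_subset_Aut_L_Z by (rule antisym)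

end
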